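(* Fix constants $\lambda_1,\ldots,\lambda_K\ge 0$ and $\mu_1,\ldots,\mu_M\ge 0$, and for a channel realization $\boldsymbol{\alpha}$ consider the problem $$\max_{p_1,\ldots,p_K\ge 0}\ \log\Big(1+\sum_{k=1}^K h_kp_k\Big)-\sum_{k=1}^K\lambda_kp_k-\sum_{m=1}^M\mu_m\sum_{k=1}^K g_{km}p_k .$$ For almost every realization $\boldsymbol{\alpha}$ the following holds: if $(p_1^*,\ldots,p_K^* )$ is an optimal solution with $p_i^*>0$ for some user $i$ and $p_j^*=0$ for every $j\neq i$, then $$\frac{h_i}{\lambda_i+\sum_{m=1}^M\mu_m g_{im}}\ \ge\ \frac{h_j}{\lambda_j+\sum_{m=1}^M\mu_m g_{jm}}\quad\forall j\neq i,$$ and $$p_i^*=\Big(\frac{1}{\lambda_i+\sum_{m=1}^M\mu_m g_{im}}-\frac{1}{h_i}\Big)^+ .$$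
   Context: $\boldsymbol{\alpha}=(h_1,\ldots,h_K,g_{11},\ldots,g_{KM})$ is a random vector of nonnegative channel power gains ($h_k$: secondary user $k$ to secondary base station; $g_{km}$: secondary user $k$ to primary receiver $m$) with a continuous, differentiable joint cumulative distribution function, the $h_k$'s and $g_{km}$'s being independent. $(x)^+=\max(0,x)$. *)

theory Defs
  imports "HOL-Probability.Probability"
begin

text \<open>A channel realization alpha = (h, g): h $ k is the gain user k -> base station,
  g $ k $ m the gain user k -> primary receiver m. Users are indexed by the finite
  type 'k (K = CARD('k)), primary receivers by the finite type 'm (M = CARD('m)).\<close>

type_synonym ('k, 'm) chan = "(real^'k) \<times> (real^'m^'k)"

definition chan_cdf :: "('k::finite, 'm::finite) chan measure \<Rightarrow> ('k, 'm) chan \<Rightarrow> real" where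
  "chan_cdf P x = measure P {a \<in> space P. (\<forall>k. fst a $ k \<le> fst x $ k) \<and> (\<forall>k m. snd a $ k $ m \<le> snd x $ k $ m)}"

definition chan_comp :: "'k + ('k \<times> 'm) \<Rightarrow> ('k::finite, 'm::finite) chan \<Rightarrow> real" where
  "chan_comp i a = (case i of Inl k \<Rightarrow> fst a $ k | Inr (k, m) \<Rightarrow> snd a $ k $ m)"

definition wcost :: "('k::finite \<Rightarrow> real) \<Rightarrow> ('m::finite \<Rightarrow> real) \<Rightarrow> ('k, 'm) chan \<Rightarrow> 'k \<Rightarrow> real" where
  "wcost lam mu a k = lam k + (\<Sum>m\<in>UNIV. mu m * snd a $ k $ m)"

definition obj :: "('k::finite \<Rightarrow> real) \<Rightarrow> ('m::finite \<Rightarrow> real) \<Rightarrow> ('k, 'm) chan \<Rightarrow> ('k \<Rightarrow> real) \<Rightarrow> real" where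
  "obj lam mu a p = ln (1 + (\<Sum>k\<in>UNIV. fst a $ k * p k)) - (\<Sum>k\<in>UNIV. lam k * p k)
      - (\<Sum>m\<in>UNIV. mu m * (\<Sum>k\<in>UNIV. snd a $ k $ m * p k))"

definition is_optimal :: "('k::finite \<Rightarrow> real) \<Rightarrow> ('m::finite \<Rightarrow> real) \<Rightarrow> ('k, 'm) chan \<Rightarrow> ('k \<Rightarrow> real) \<Rightarrow> bool" where
  "is_optimal lam mu a p \<longleftrightarrow> (\<forall>k. 0 \<le> p k) \<and>
     (\<forall>q. (\<forall>k. 0 \<le> q k) \<longrightarrow> obj lam mu a q \<le> obj lam mu a p)"

end

theory Submission
  imports Defs
begin

text \<open>For a fixed realization with h_i > 0, restricting the objective to the line through an
  optimal single-user allocation along coordinate i gives the interior stationarity condition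
  h_i = w_i (1 + h_i p_i), i.e. p_i = 1/w_i - 1/h_i; moving along any other coordinate j gives
  the one-sided condition h_j \<le> w_j (1 + h_i p_i) = w_j h_i / w_i, which is the ratio ordering.
  Randomness only enters through h_k > 0 almost surely: a continuous CDF of a nonnegative
  vector cannot charge the hyperplane h_k = 0.\<close>

lemma obj_eq_wcost:
  "obj lam mu a p = ln (1 + (\<Sum>k\<in>UNIV. fst a $ k * p k)) - (\<Sum>k\<in>UNIV. wcost lam mu a k * p k)"
proof -
  have "(\<Sum>m\<in>UNIV. mu m * (\<Sum>k\<in>UNIV. snd a $ k $ m * p k))
      = (\<Sum>m\<in>UNIV. \<Sum>k\<in>UNIV. mu m * snd a $ k $ m * p k)"
    by (simp add: sum_distrib_left mult.assoc)
  also have "\<dots> = (\<Sum>k\<in>UNIV. \<Sum>m\<in>UNIV. mu m * snd a $ k $ m * p k)"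
    by (rule sum.swap)
  also have "\<dots> = (\<Sum>k\<in>UNIV. (\<Sum>m\<in>UNIV. mu m * snd a $ k $ m) * p k)"
    by (simp add: sum_distrib_right)
  finally show ?thesis
    unfolding obj_def wcost_def by (simp add: distrib_right sum.distrib)
qed

lemma obj_eq_on_support:
  assumes "\<forall>k. k \<notin> S \<longrightarrow> p k = 0"
  shows "obj lam mu a p = ln (1 + (\<Sum>k\<in>S. fst a $ k * p k)) - (\<Sum>k\<in>S. wcost lam mu a k * p k)"
proof -
  have "(\<Sum>k\<in>UNIV. f k * p k) = (\<Sum>k\<in>S. f k * p k)" for f :: "'a \<Rightarrow> real"
    by (rule sum.mono_neutral_right) (use assms in auto)
  then show ?thesis by (simp add: obj_eq_wcost)
qed

lemma wcost_nonneg: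
  assumes "\<forall>k. 0 \<le> lam k" "\<forall>m. 0 \<le> mu m" "\<forall>m. 0 \<le> snd a $ k $ m"
  shows "0 \<le> wcost lam mu a k"
  unfolding wcost_def using assms by (simp add: sum_nonneg)

lemma is_optimal_ge:
  "is_optimal lam mu a p \<Longrightarrow> \<forall>k. 0 \<le> q k \<Longrightarrow> obj lam mu a q \<le> obj lam mu a p"
  by (simp add: is_optimal_def)

lemma DERIV_nonpos_at_left_endpoint_max:
  fixes f :: "real \<Rightarrow> real"
  assumes "DERIV f x :> D" and "\<forall>t>x. f t \<le> f x"
  shows "D \<le> 0"
proof (rule ccontr)
  assume "\<not> D \<le> 0"
  then obtain d where "d > 0" "\<forall>t>0. t < d \<longrightarrow> f x < f (x + t)"
    using DERIV_pos_inc_right[OF assms(1)] by force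
  then have "f x < f (x + d / 2)" by simp
  with assms(2) \<open>d > 0\<close> show False by (metis add.commute less_add_same_cancel2 half_gt_zero not_le)
qed

lemma optimal_single_user_stationary:
  assumes "0 < fst a $ i" and opt: "is_optimal lam mu a p" and "0 < p i"
    and single: "\<forall>j. j \<noteq> i \<longrightarrow> p j = 0"
  shows "fst a $ i = wcost lam mu a i * (1 + fst a $ i * p i)"
proof -
  define h w where "h = fst a $ i" and "w = wcost lam mu a i"
  define G where "G t = ln (1 + h * t) - w * t" for t
  have obj_line: "obj lam mu a (p(i := t)) = G t" for t
    using single by (subst obj_eq_on_support[where S = "{i}"]) (auto simp: G_def h_def w_def)
  have pos: "0 < 1 + h * p i" using assms(1,3) by (simp add: h_def add_pos_pos)
  have "DERIV G (p i) :> h / (1 + h * p i) - w"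
    unfolding G_def using pos by (auto intro!: derivative_eq_intros)
  moreover have "\<forall>t. \<bar>p i - t\<bar> < p i \<longrightarrow> G t \<le> G (p i)"
  proof (intro allI impI)
    fix t assume "\<bar>p i - t\<bar> < p i"
    then have "\<forall>k. 0 \<le> (p(i := t)) k" using opt by (auto simp: is_optimal_def)
    then have "obj lam mu a (p(i := t)) \<le> obj lam mu a p" by (rule is_optimal_ge[OF opt])
    then show "G t \<le> G (p i)" using obj_line[of t] obj_line[of "p i"] by simp
  qed
  ultimately have "h / (1 + h * p i) - w = 0" using DERIV_local_max \<open>0 < p i\<close> by blast
  with pos show ?thesis by (simp add: h_def w_def field_simps)
qed

lemma optimal_single_user_other:
  assumes "0 \<le> fst a $ i" and opt: "is_optimal lam mu a p"
    and single: "\<forall>k. k \<noteq> i \<longrightarrow> p k = 0" and "j \<noteq> i"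
  shows "fst a $ j \<le> wcost lam mu a j * (1 + fst a $ i * p i)"
proof -
  define c where "c = 1 + fst a $ i * p i"
  define H where "H t = ln (c + fst a $ j * t) - wcost lam mu a i * p i - wcost lam mu a j * t" for t
  have obj_line: "obj lam mu a (p(j := t)) = H t" for t
    using single \<open>j \<noteq> i\<close>
    by (subst obj_eq_on_support[where S = "{i, j}"]) (auto simp: H_def c_def add.assoc)
  have "0 \<le> p i" using opt by (simp add: is_optimal_def)
  then have pos: "0 < c" using assms(1) by (simp add: c_def add_pos_nonneg)
  have "DERIV H 0 :> fst a $ j / (c + fst a $ j * 0) - wcost lam mu a j"
    unfolding H_def using pos by (auto intro!: derivative_eq_intros)
  moreover have "\<forall>t>0. H t \<le> H 0"
  proof (intro allI impI)
    fix t :: real assume "t > 0"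
    then have "\<forall>k. 0 \<le> (p(j := t)) k" using opt by (auto simp: is_optimal_def)
    then have "obj lam mu a (p(j := t)) \<le> obj lam mu a p" by (rule is_optimal_ge[OF opt])
    moreover have "p(j := 0) = p" using single \<open>j \<noteq> i\<close> by auto
    ultimately show "H t \<le> H 0" using obj_line[of t] obj_line[of 0] by simp
  qed
  ultimately have "fst a $ j / c - wcost lam mu a j \<le> 0"
    by (auto dest: DERIV_nonpos_at_left_endpoint_max)
  with pos show ?thesis by (simp add: c_def field_simps)
qed

lemma optimal_single_user:
  assumes "0 < fst a $ i" and wcost: "\<forall>k. 0 \<le> wcost lam mu a k"
    and opt: "is_optimal lam mu a p" and "0 < p i" and single: "\<forall>j. j \<noteq> i \<longrightarrow> p j = 0"
  shows "(\<forall>j. j \<noteq> i \<longrightarrow> fst a $ j / wcost lam mu a j \<le> fst a $ i / wcost lam mu a i) \<and>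
    p i = max 0 (1 / wcost lam mu a i - 1 / fst a $ i)"
proof -
  define h w where "h = fst a $ i" and "w = wcost lam mu a i"
  have h: "0 < h" using assms(1) by (simp add: h_def)
  have stat: "h = w * (1 + h * p i)"
    using optimal_single_user_stationary[OF assms(1) opt \<open>0 < p i\<close> single] by (simp add: h_def w_def)
  have pos: "0 < 1 + h * p i" using h \<open>0 < p i\<close> by (simp add: add_pos_pos)
  then have w: "0 < w" using stat h by (metis zero_less_mult_pos2)
  have level: "1 + h * p i = h / w" using stat w by (simp add: field_simps)
  then have "p i = 1 / w - 1 / h" using h by (simp add: field_simps)
  then have power: "p i = max 0 (1 / w - 1 / h)" using \<open>0 < p i\<close> by simp
  have "fst a $ j / wcost lam mu a j \<le> h / w" if "j \<noteq> i" for j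
  proof -
    define hj wj where "hj = fst a $ j" and "wj = wcost lam mu a j"
    have "hj \<le> wj * (h / w)"
      using optimal_single_user_other[OF _ opt single that] h level by (simp add: h_def hj_def wj_def)
    then have cross: "hj * w \<le> wj * h" using w by (simp add: field_simps)
    have "0 \<le> wj" using wcost by (simp add: wj_def)
    then consider "wj = 0" | "0 < wj" by linarith
    then have "hj / wj \<le> h / w"
    proof cases
      case 1 \<comment> \<open>the ratio of user j is then 0 by HOL's convention x / 0 = 0\<close>
      then show ?thesis using h w by simp
    next
      case 2 then show ?thesis using cross w by (simp add: field_simps mult.commute)
    qed
    then show ?thesis by (simp add: hj_def wj_def)
  qed
  with power show ?thesis by (simp add: h_def w_def)
qed

definition chan_orthant :: "('k::finite \<Rightarrow> real) \<Rightarrow> ('k \<Rightarrow> 'm::finite \<Rightarrow> real) \<Rightarrow> ('k, 'm) chan set" where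
  "chan_orthant c d = {a. (\<forall>k. fst a $ k \<le> c k) \<and> (\<forall>k m. snd a $ k $ m \<le> d k m)}"

lemma chan_orthant_borel: "chan_orthant c d \<in> sets borel"
  unfolding chan_orthant_def
  by (intro borel_closed closed_Collect_all closed_Collect_conj closed_Collect_le continuous_intros)

lemma chan_cdf_eq_orthant:
  assumes "space P = UNIV"
  shows "chan_cdf P x = measure P (chan_orthant (\<lambda>k. fst x $ k) (\<lambda>k m. snd x $ k $ m))"
  unfolding chan_cdf_def chan_orthant_def assms by simp

lemma emeasure_orthant_gain_zero:
  fixes P :: "('k::finite, 'm::finite) chan measure"
  assumes "finite_measure P" and "sets P = sets borel"
    and nonneg: "AE a in P. 0 \<le> fst a $ k"
    and cont: "continuous_on UNIV (chan_cdf P)"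
  shows "emeasure P (chan_orthant (\<lambda>j. if j = k then 0 else c j) d) = 0"
proof -
  have space: "space P = UNIV" using sets_eq_imp_space_eq[OF assms(2)] by simp
  define f where "f t = chan_cdf P ((\<chi> j. if j = k then t else c j), (\<chi> j m. d j m))" for t
  have f_eq: "f t = measure P (chan_orthant (\<lambda>j. if j = k then t else c j) d)" for t
    by (simp add: f_def chan_cdf_eq_orthant[OF space])
  have "continuous_on UNIV (\<lambda>t::real. if j = k then t else c j)" for j
    by (cases "j = k") (auto intro: continuous_intros)
  then have "continuous_on UNIV f" unfolding f_def
    by (intro continuous_on_compose2[OF cont]) (auto intro!: continuous_intros)
  then have closed: "closed {t. f t = 0}"
    using continuous_closed_preimage_constant[of UNIV f 0] by simp
  have "f t = 0" if "t < 0" for t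
  proof -
    have "AE a in P. a \<notin> chan_orthant (\<lambda>j. if j = k then t else c j) d"
      using nonneg by eventually_elim (use that in \<open>auto simp: chan_orthant_def dest: spec[of _ k]\<close>)
    moreover have "chan_orthant (\<lambda>j. if j = k then t else c j) d \<in> sets P"
      using chan_orthant_borel assms(2) by simp
    ultimately have "emeasure P (chan_orthant (\<lambda>j. if j = k then t else c j) d) = 0"
      by (subst (asm) AE_iff_measurable) (auto simp: space)
    then show ?thesis by (simp add: f_eq measure_def)
  qed
  then have "closure {..<(0::real)} \<subseteq> {t. f t = 0}"
    by (intro closure_minimal[OF _ closed]) auto
  then have "f 0 = 0" by auto
  then show ?thesis by (simp add: f_eq finite_measure.emeasure_eq_measure[OF assms(1)])
qed

lemma gain_nonpos_eq_UN_orthants: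
  "{a :: ('k::finite, 'm::finite) chan. fst a $ k \<le> 0}
     = (\<Union>n::nat. chan_orthant (\<lambda>j. if j = k then 0 else real n) (\<lambda>j m. real n))"
proof safe
  fix a :: "('k, 'm) chan" assume "fst a $ k \<le> 0"
  obtain n :: nat where n: "norm a \<le> real n" using real_arch_simple by blast
  have "fst a $ j \<le> real n" for j
    using component_le_norm_cart[of "fst a" j] norm_fst_le[of "fst a" "snd a"] n by auto
  moreover have "snd a $ j $ m \<le> real n" for j m
    using component_le_norm_cart[of "snd a $ j" m] norm_snd_le[of "snd a" "fst a"] n
      Finite_Cartesian_Product.norm_nth_le[where x="snd a" and i=j]
    by auto
  ultimately show "a \<in> (\<Union>n. chan_orthant (\<lambda>j. if j = k then 0 else real n) (\<lambda>j m. real n))"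
    using \<open>fst a $ k \<le> 0\<close> unfolding chan_orthant_def by auto
qed (auto simp: chan_orthant_def dest: spec[of _ k])

lemma AE_gain_pos:
  fixes P :: "('k::finite, 'm::finite) chan measure"
  assumes "finite_measure P" and "sets P = sets borel"
    and nonneg: "AE a in P. 0 \<le> fst a $ k"
    and cont: "continuous_on UNIV (chan_cdf P)"
  shows "AE a in P. 0 < fst a $ k"
proof -
  have space: "space P = UNIV" using sets_eq_imp_space_eq[OF assms(2)] by simp
  have "emeasure P {a. fst a $ k \<le> 0} = 0"
    unfolding gain_nonpos_eq_UN_orthants
    by (rule emeasure_UN_eq_0)
      (use emeasure_orthant_gain_zero[OF assms] chan_orthant_borel assms(2) in auto)
  moreover have "{a :: ('k, 'm) chan. fst a $ k \<le> 0} \<in> sets P"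
    unfolding assms(2) by (intro borel_closed closed_Collect_le continuous_intros)
  ultimately show ?thesis
    by (subst AE_iff_measurable[OF _ refl]) (auto simp: space not_less)
qed

theorem lemma3p2:
  fixes P :: "('k::finite, 'm::finite) chan measure"
    and lam :: "'k \<Rightarrow> real" and mu :: "'m \<Rightarrow> real"
  assumes "prob_space P"
    and "sets P = sets borel"
    and "AE a in P. (\<forall>k. 0 \<le> fst a $ k) \<and> (\<forall>k m. 0 \<le> snd a $ k $ m)"
    and "continuous_on UNIV (chan_cdf P)"
    and "chan_cdf P differentiable_on UNIV"
    and "prob_space.indep_vars P (\<lambda>_. borel) chan_comp UNIV"
    and "\<forall>k. 0 \<le> lam k"
    and "\<forall>m. 0 \<le> mu m"
  shows "AE a in P. \<forall>p i. is_optimal lam mu a p \<and> 0 < p i \<and> (\<forall>j. j \<noteq> i \<longrightarrow> p j = 0) \<longrightarrow>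
           (\<forall>j. j \<noteq> i \<longrightarrow> fst a $ j / wcost lam mu a j \<le> fst a $ i / wcost lam mu a i) \<and>
           p i = max 0 (1 / wcost lam mu a i - 1 / fst a $ i)"
proof -
  have "AE a in P. \<forall>k\<in>UNIV. 0 < fst a $ k"
  proof (rule AE_finite_allI)
    show "AE a in P. 0 < fst a $ k" for k
      using assms(3) prob_space.finite_measure[OF assms(1)]
      by (intro AE_gain_pos[OF _ assms(2) _ assms(4)]) (auto elim: AE_mp)
  qed simp
  with assms(3) show ?thesis
  proof eventually_elim
    case (elim a)
    then have "\<forall>k. 0 \<le> wcost lam mu a k" using assms(7,8) by (simp add: wcost_nonneg)
    with elim show ?case using optimal_single_user by blast
  qed
qed

end
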